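(* Let $\mu$ be a positive real with $\mu\le\frac{1}{225}$. Let $G$ be an $n$-vertex graph of minimum degree at least $15\sqrt{\mu}\,n$, and let $\mathcal{F}$ be a $\mu n$-bounded incompatibility system over $G$. Suppose $P=(v_0,v_1,\dots,v_\ell)$ is a smooth path in $G$ such that there is no vertex $w\notin V(P)$ for which $(w,v_0,\dots,v_\ell)$ is a smooth path. Then there exists a subset $X$ of the set of good neighbors of $v_0$ in $P$ with $|X|\ge d(v_0)-14\sqrt{\mu}\,n$ such that for every $v_i\in X$ the path $(v_{i-1},\dots,v_1,v_0,v_i,v_{i+1},\dots,v_\ell)$ is smooth.
   Context: All graphs are finite and simple; $d(v)$ is the degree of $v$. An incompatibility system $\mathcal{F}$ over $G=(V,E)$ is a family $\{F_v\}_{v\in V}$ where each $F_v$ is a set of unordered pairs $\{e,e'\}$ of distinct edges with $e\cap e'=\{v\}$; edges $e,e'$ are incompatible if $\{e,e'\}\in F_v$ for some $v$, compatible otherwise. A subgraph (path, cycle) is compatible with $\mathcal{F}$ if every pair of its edges is compatible. For a positive real $\Delta$, $\mathcal{F}$ is $\Delta$-bounded if for every vertex $v$ and edge $e\ni v$, at most $\Delta$ other edges $e'\ni v$ satisfy $\{e,e'\}\in F_v$. For a path $P=(v_0,\dots,v_\ell)$, $|P|$ is its number of vertices. For a vertex $w$, a vertex $v_i\in V(P)$ adjacent to $w$ is a bad neighbor of $w$ in $P$ if $\{w,v_i\}$ is incompatible with $\{v_i,v_{i-1}\}$ or with $\{v_i,v_{i+1}\}$ (for those of these that are edges of $P$),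 and a good neighbor otherwise. For $\gamma>0$, $w$ is $\gamma$-bad for $P$ if it has at least $\gamma|P|$ bad neighbors in $P$, and $\gamma$-good otherwise. Two vertices $v_1,v_2$ are $\gamma$-correlated if there are at least $\gamma n$ vertices $w$ such that $\{v_1,w\}$ and $\{v_2,w\}$ are incompatible edges; otherwise $\gamma$-uncorrelated. For an $n$-vertex graph with a $\mu n$-bounded system $\mathcal{F}$, a path $P=(v_0,\dots,v_\ell)$ is smooth (smoothly compatible with $\mathcal{F}$) if (i) $P$ is compatible with $\mathcal{F}$, (ii) both $v_0$ and $v_\ell$ are $8\sqrt{\mu}$-good for $P$, and (iii) $v_0$ and $v_\ell$ are $\sqrt{\mu}$-uncorrelated. *)

theory Defs
  imports Complex_Main
begin

definition simple_graph :: "'a set \<Rightarrow> 'a set set \<Rightarrow> bool" where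
  "simple_graph V E \<longleftrightarrow> finite V \<and> (\<forall>e\<in>E. e \<subseteq> V \<and> card e = 2)"

definition degree :: "'a set set \<Rightarrow> 'a \<Rightarrow> nat" where
  "degree E v = card {e\<in>E. v \<in> e}"

definition incompat_system :: "'a set \<Rightarrow> 'a set set \<Rightarrow> ('a \<Rightarrow> 'a set set set) \<Rightarrow> bool" where
  "incompat_system V E F \<longleftrightarrow>
     (\<forall>v. \<forall>p\<in>F v. \<exists>e e'. p = {e, e'} \<and> e \<noteq> e' \<and> e \<in> E \<and> e' \<in> E \<and> e \<inter> e' = {v})
     \<and> (\<forall>v. v \<notin> V \<longrightarrow> F v = {})"

definition incompatible :: "('a \<Rightarrow> 'a set set set) \<Rightarrow> 'a set \<Rightarrow> 'a set \<Rightarrow> bool" where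
  "incompatible F e e' \<longleftrightarrow> (\<exists>v. {e, e'} \<in> F v)"

definition bounded_system :: "'a set set \<Rightarrow> ('a \<Rightarrow> 'a set set set) \<Rightarrow> real \<Rightarrow> bool" where
  "bounded_system E F \<Delta> \<longleftrightarrow>
     (\<forall>v. \<forall>e\<in>E. v \<in> e \<longrightarrow> real (card {e'. e' \<noteq> e \<and> v \<in> e' \<and> {e, e'} \<in> F v}) \<le> \<Delta>)"

definition is_path :: "'a set \<Rightarrow> 'a set set \<Rightarrow> 'a list \<Rightarrow> bool" where
  "is_path V E P \<longleftrightarrow> P \<noteq> [] \<and> distinct P \<and> set P \<subseteq> V \<and>
     (\<forall>i. Suc i < length P \<longrightarrow> {P ! i, P ! Suc i} \<in> E)"

definition path_edges :: "'a list \<Rightarrow> 'a set set" where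
  "path_edges P = {{P ! i, P ! Suc i} | i. Suc i < length P}"

definition compatible_path :: "('a \<Rightarrow> 'a set set set) \<Rightarrow> 'a list \<Rightarrow> bool" where
  "compatible_path F P \<longleftrightarrow>
     (\<forall>e\<in>path_edges P. \<forall>e'\<in>path_edges P. \<not> incompatible F e e')"

definition bad_neighbor :: "'a set set \<Rightarrow> ('a \<Rightarrow> 'a set set set) \<Rightarrow> 'a list \<Rightarrow> 'a \<Rightarrow> nat \<Rightarrow> bool" where
  "bad_neighbor E F P w i \<longleftrightarrow> i < length P \<and> {w, P ! i} \<in> E \<and>
     ((0 < i \<and> incompatible F {w, P ! i} {P ! i, P ! (i - 1)}) \<or>
      (Suc i < length P \<and> incompatible F {w, P ! i} {P ! i, P ! Suc i}))"

definition good_neighbor :: "'a set set \<Rightarrow> ('a \<Rightarrow> 'a set set set) \<Rightarrow> 'a list \<Rightarrow> 'a \<Rightarrow> nat \<Rightarrow> bool" where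
  "good_neighbor E F P w i \<longleftrightarrow> i < length P \<and> {w, P ! i} \<in> E \<and> \<not> bad_neighbor E F P w i"

definition bad_neighbors :: "'a set set \<Rightarrow> ('a \<Rightarrow> 'a set set set) \<Rightarrow> 'a list \<Rightarrow> 'a \<Rightarrow> 'a set" where
  "bad_neighbors E F P w = {P ! i | i. bad_neighbor E F P w i}"

definition good_neighbors :: "'a set set \<Rightarrow> ('a \<Rightarrow> 'a set set set) \<Rightarrow> 'a list \<Rightarrow> 'a \<Rightarrow> 'a set" where
  "good_neighbors E F P w = {P ! i | i. good_neighbor E F P w i}"

definition gamma_bad :: "'a set set \<Rightarrow> ('a \<Rightarrow> 'a set set set) \<Rightarrow> real \<Rightarrow> 'a list \<Rightarrow> 'a \<Rightarrow> bool" where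
  "gamma_bad E F \<gamma> P w \<longleftrightarrow> real (card (bad_neighbors E F P w)) \<ge> \<gamma> * real (length P)"

definition gamma_good :: "'a set set \<Rightarrow> ('a \<Rightarrow> 'a set set set) \<Rightarrow> real \<Rightarrow> 'a list \<Rightarrow> 'a \<Rightarrow> bool" where
  "gamma_good E F \<gamma> P w \<longleftrightarrow> \<not> gamma_bad E F \<gamma> P w"

definition correlated :: "'a set \<Rightarrow> 'a set set \<Rightarrow> ('a \<Rightarrow> 'a set set set) \<Rightarrow> real \<Rightarrow> 'a \<Rightarrow> 'a \<Rightarrow> bool" where
  "correlated V E F \<gamma> v1 v2 \<longleftrightarrow>
     real (card {w\<in>V. {v1, w} \<in> E \<and> {v2, w} \<in> E \<and> incompatible F {v1, w} {v2, w}})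
       \<ge> \<gamma> * real (card V)"

definition smooth_path :: "'a set \<Rightarrow> 'a set set \<Rightarrow> ('a \<Rightarrow> 'a set set set) \<Rightarrow> real \<Rightarrow> 'a list \<Rightarrow> bool" where
  "smooth_path V E F \<mu> P \<longleftrightarrow> is_path V E P \<and> compatible_path F P \<and>
     gamma_good E F (8 * sqrt \<mu>) P (hd P) \<and> gamma_good E F (8 * sqrt \<mu>) P (last P) \<and>
     \<not> correlated V E F (sqrt \<mu>) (hd P) (last P)"

end

theory Submission
  imports Defs
begin

text \<open>
  Write P = v0 ... vl and s = sqrt mu. If a neighbour w of v0 off P is such that w # P is not
  smooth, then w lies in one of a few exceptional classes: w v0 is incompatible with v0 v1 or with
  v0 vl, w is a common neighbour of v0 and vl with w v0, w vl incompatible, w is correlated with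
  vl, or w is bad for P. Boundedness makes each class of size O(s n) (by double counting for the
  last two), so by maximality almost all of the at least 15 s n neighbours of v0 lie on P; in
  particular |P| \<ge> 12 s n.

  Rotating at a good neighbour vi only adds the edge v0 vi and makes v(i-1) the new first vertex,
  whose bad neighbours grow by at most two. The rotation is smooth unless vi falls into the
  analogous exceptional classes, or v(i-1) is nearly bad or correlated with vl. Since P is long,
  nearly bad vertices are rare, and discarding all exceptional vi loses at most 14 s n good
  neighbours.
\<close>

section \<open>Edges of a path\<close>

lemma path_edges_Nil [simp]: "path_edges [] = {}"
  by (simp add: path_edges_def)

lemma path_edges_singleton [simp]: "path_edges [x] = {}"
  by (simp add: path_edges_def)

lemma path_edges_Cons_Cons [simp]:
  "path_edges (x # y # zs) = insert {x, y} (path_edges (y # zs))"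
proof (intro set_eqI iffI)
  fix e assume "e \<in> path_edges (x # y # zs)"
  then obtain i where "e = {(x#y#zs) ! i, (x#y#zs) ! Suc i}" "Suc i < length (x#y#zs)"
    by (auto simp: path_edges_def)
  then show "e \<in> insert {x, y} (path_edges (y # zs))"
    by (cases i) (auto simp: path_edges_def)
next
  fix e assume "e \<in> insert {x, y} (path_edges (y # zs))"
  then consider "e = {x, y}" | j where "e = {(y#zs) ! j, (y#zs) ! Suc j}" "Suc j < length (y#zs)"
    by (auto simp: path_edges_def)
  then show "e \<in> path_edges (x # y # zs)"
  proof cases
    case 1
    then show ?thesis unfolding path_edges_def by (intro CollectI exI[of _ 0]) simp
  next
    case (2 j)
    then show ?thesis unfolding path_edges_def by (intro CollectI exI[of _ "Suc j"]) simp
  qed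
qed

lemma path_edges_Cons: "xs \<noteq> [] \<Longrightarrow> path_edges (w # xs) = insert {w, hd xs} (path_edges xs)"
  by (cases xs) auto

lemma path_edges_append:
  "xs \<noteq> [] \<Longrightarrow> ys \<noteq> [] \<Longrightarrow>
    path_edges (xs @ ys) = path_edges xs \<union> path_edges ys \<union> {{last xs, hd ys}}"
  by (induction xs rule: induct_list012) (auto simp: path_edges_Cons)

lemma path_edges_rev [simp]: "path_edges (rev xs) = path_edges xs"
proof (induction xs)
  case (Cons a xs)
  then show ?case
    by (cases "xs = []") (auto simp: path_edges_append path_edges_Cons last_rev insert_commute)
qed simp

lemma path_edges_subset_set: "e \<in> path_edges xs \<Longrightarrow> e \<subseteq> set xs"
  by (induction xs rule: induct_list012) auto

lemma path_edge_at_hd: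
  "distinct xs \<Longrightarrow> e \<in> path_edges xs \<Longrightarrow> hd xs \<in> e \<Longrightarrow> e = {xs ! 0, xs ! 1}"
  by (induction xs rule: induct_list012) (auto dest!: path_edges_subset_set)

lemma path_edge_at_nth_iff:
  assumes "distinct L" "i < length L"
  shows "e \<in> path_edges L \<and> L ! i \<in> e \<longleftrightarrow>
    (0 < i \<and> e = {L ! i, L ! (i - 1)}) \<or> (Suc i < length L \<and> e = {L ! i, L ! Suc i})"
proof
  assume "e \<in> path_edges L \<and> L ! i \<in> e"
  then obtain j where j: "e = {L ! j, L ! Suc j}" "Suc j < length L" "L ! i \<in> e"
    by (auto simp: path_edges_def)
  then have "i = j \<or> i = Suc j"
    using assms by (auto simp: nth_eq_iff_index_eq)
  then show "(0 < i \<and> e = {L ! i, L ! (i - 1)}) \<or> (Suc i < length L \<and> e = {L ! i, L ! Suc i})"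
    using j by (auto simp: insert_commute)
next
  assume "(0 < i \<and> e = {L ! i, L ! (i - 1)}) \<or> (Suc i < length L \<and> e = {L ! i, L ! Suc i})"
  then show "e \<in> path_edges L \<and> L ! i \<in> e"
  proof (elim disjE conjE)
    assume "0 < i" "e = {L ! i, L ! (i - 1)}"
    then have "e = {L ! (i - 1), L ! Suc (i - 1)}" by (auto simp: insert_commute)
    then show ?thesis using \<open>0 < i\<close> assms(2) unfolding path_edges_def by auto
  qed (auto simp: path_edges_def)
qed

lemma is_path_iff_path_edges:
  "is_path V E P \<longleftrightarrow> P \<noteq> [] \<and> distinct P \<and> set P \<subseteq> V \<and> path_edges P \<subseteq> E"
  unfolding is_path_def path_edges_def by auto

lemma path_edges_rotate:
  assumes "0 < i" "i < length P"
  shows "path_edges (rev (take i P) @ drop i P) \<subseteq> path_edges P \<union> {{P ! 0, P ! i}}"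
proof -
  have take: "take i P \<noteq> [] \<and> hd (take i P) = P ! 0"
    using assms by (cases P) auto
  have drop: "drop i P \<noteq> [] \<and> hd (drop i P) = P ! i"
    using assms by (simp add: hd_drop_conv_nth)
  have "path_edges P = path_edges (take i P @ drop i P)" by simp
  then show ?thesis
    using take drop by (auto simp: path_edges_append last_rev simp del: append_take_drop_id)
qed

lemma rotated_path_simps:
  assumes "0 < i" "i < length P"
  shows "length (rev (take i P) @ drop i P) = length P"
    and "set (rev (take i P) @ drop i P) = set P"
    and "distinct P \<Longrightarrow> distinct (rev (take i P) @ drop i P)"
    and "hd (rev (take i P) @ drop i P) = P ! (i - 1)"
    and "last (rev (take i P) @ drop i P) = last P"
proof -
  show "length (rev (take i P) @ drop i P) = length P"
    using assms by simp
  show "set (rev (take i P) @ drop i P) = set P"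
    by (metis append_take_drop_id set_append set_rev)
  show "distinct P \<Longrightarrow> distinct (rev (take i P) @ drop i P)"
    by (metis append_take_drop_id distinct_append distinct_rev set_rev)
  show "hd (rev (take i P) @ drop i P) = P ! (i - 1)"
    using assms by (cases P) (simp_all add: hd_append hd_rev last_conv_nth)
  show "last (rev (take i P) @ drop i P) = last P"
    using assms by simp
qed

definition successors_on_path :: "'a list \<Rightarrow> 'a set \<Rightarrow> 'a set" where
  "successors_on_path P S = (\<lambda>j. P ! Suc j) ` {j. Suc j < length P \<and> P ! j \<in> S}"

lemma successor_on_path:
  "0 < i \<Longrightarrow> i < length P \<Longrightarrow> P ! (i - 1) \<in> S \<Longrightarrow> P ! i \<in> successors_on_path P S"
  unfolding successors_on_path_def by (rule image_eqI[of _ _ "i - 1"]) auto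

lemma card_successors_on_path_le:
  assumes "distinct P" "finite S"
  shows "card (successors_on_path P S) \<le> card S"
proof -
  let ?J = "{j. Suc j < length P \<and> P ! j \<in> S}"
  have "card (successors_on_path P S) \<le> card ?J"
    unfolding successors_on_path_def
    by (rule card_image_le, rule finite_subset[of _ "{..<length P}"]) auto
  also have "\<dots> \<le> card S"
  proof (rule card_inj_on_le[OF _ _ assms(2)])
    show "inj_on ((!) P) ?J"
      using assms(1) by (rule inj_on_nth) auto
  qed auto
  finally show ?thesis .
qed

section \<open>Bad and good neighbours\<close>

lemma nth_mem_image_nth_iff:
  assumes "distinct P" "i < length P" "\<And>j. Q j \<Longrightarrow> j < length P"
  shows "P ! i \<in> {P ! j | j. Q j} \<longleftrightarrow> Q i"
proof
  assume "P ! i \<in> {P ! j | j. Q j}"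
  then obtain j where "P ! i = P ! j" "Q j"
    by blast
  then show "Q i"
    using assms nth_eq_iff_index_eq by metis
qed blast

lemma bad_neighbor_iff:
  assumes "distinct L"
  shows "bad_neighbor E F L u i \<longleftrightarrow> i < length L \<and> {u, L ! i} \<in> E \<and>
    (\<exists>e \<in> path_edges L. L ! i \<in> e \<and> incompatible F {u, L ! i} e)"
proof (cases "i < length L")
  case True
  have "(\<exists>e \<in> path_edges L. L ! i \<in> e \<and> incompatible F {u, L ! i} e) \<longleftrightarrow>
      (\<exists>e. (e \<in> path_edges L \<and> L ! i \<in> e) \<and> incompatible F {u, L ! i} e)"
    by blast
  also have "\<dots> \<longleftrightarrow> (0 < i \<and> incompatible F {u, L ! i} {L ! i, L ! (i - 1)}) \<or>
      (Suc i < length L \<and> incompatible F {u, L ! i} {L ! i, L ! Suc i})"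
    unfolding path_edge_at_nth_iff[OF assms True] by blast
  finally show ?thesis
    unfolding bad_neighbor_def by blast
qed (simp add: bad_neighbor_def)

lemma bad_neighbors_eq:
  assumes "distinct L"
  shows "bad_neighbors E F L u =
    {y \<in> set L. {u, y} \<in> E \<and> (\<exists>e \<in> path_edges L. y \<in> e \<and> incompatible F {u, y} e)}"
  unfolding bad_neighbors_def bad_neighbor_iff[OF assms] by (auto simp: in_set_conv_nth)

lemma bad_neighbors_subset_set: "bad_neighbors E F L u \<subseteq> set L"
  by (auto simp: bad_neighbors_def bad_neighbor_def)

lemma finite_bad_neighbors: "finite (bad_neighbors E F L u)"
  using bad_neighbors_subset_set finite_set finite_subset by metis

lemma bad_neighbors_nth_iff:
  "distinct P \<Longrightarrow> i < length P \<Longrightarrow> P ! i \<in> bad_neighbors E F P w \<longleftrightarrow> bad_neighbor E F P w i"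
  unfolding bad_neighbors_def by (rule nth_mem_image_nth_iff) (simp_all add: bad_neighbor_def)

lemma good_neighbors_nth_iff:
  "distinct P \<Longrightarrow> i < length P \<Longrightarrow> P ! i \<in> good_neighbors E F P w \<longleftrightarrow> good_neighbor E F P w i"
  unfolding good_neighbors_def by (rule nth_mem_image_nth_iff) (simp_all add: good_neighbor_def)

lemma bad_neighbors_subset_if_path_edges_subset:
  assumes "distinct P" "distinct Q" "path_edges Q \<subseteq> path_edges P \<union> {f}"
  shows "bad_neighbors E F Q u \<subseteq> bad_neighbors E F P u \<union> {y \<in> f. incompatible F {u, y} f}"
proof -
  have "e \<in> path_edges P" "y \<in> set P" if "e \<in> path_edges Q" "e \<noteq> f" "y \<in> e" for e y
    using that assms(3) path_edges_subset_set by blast+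
  then show ?thesis
    unfolding bad_neighbors_eq[OF assms(1)] bad_neighbors_eq[OF assms(2)] by blast
qed

lemma card_bad_neighbors_le_if_new_edge_harmless:
  assumes "distinct P" "distinct Q" "path_edges Q \<subseteq> path_edges P \<union> {f}"
    and "\<forall>y \<in> f. \<not> incompatible F {u, y} f"
  shows "card (bad_neighbors E F Q u) \<le> card (bad_neighbors E F P u)"
  using bad_neighbors_subset_if_path_edges_subset[OF assms(1-3), of E F u] assms(4)
  by (intro card_mono finite_bad_neighbors) auto

lemma card_bad_neighbors_le_add_2:
  assumes "distinct P" "distinct Q" "path_edges Q \<subseteq> path_edges P \<union> {{a, b}}"
  shows "card (bad_neighbors E F Q u) \<le> card (bad_neighbors E F P u) + 2"
proof -
  have "card (bad_neighbors E F Q u) \<le> card (bad_neighbors E F P u \<union> {a, b})"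
    using bad_neighbors_subset_if_path_edges_subset[OF assms, of E F u]
    by (intro card_mono) (auto simp: finite_bad_neighbors)
  also have "\<dots> \<le> card (bad_neighbors E F P u) + card {a, b}"
    by (rule card_Un_le)
  also have "card {a, b} \<le> 2"
    by (simp add: card_insert_if)
  finally show ?thesis by simp
qed

section \<open>Bounded incompatibility systems\<close>

lemma incompatible_commute: "incompatible F e e' \<longleftrightarrow> incompatible F e' e"
  unfolding incompatible_def by (simp add: insert_commute)

locale bounded_incompat_system =
  fixes V :: "'a set" and E :: "'a set set" and F :: "'a \<Rightarrow> 'a set set set" and m :: real
  assumes simple: "simple_graph V E"
    and system: "incompat_system V E F"
    and bounded: "bounded_system E F m"
    and bound_nonneg: "0 \<le> m"
begin

lemma finite_V: "finite V"
  using simple by (simp add: simple_graph_def)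

lemma edge_subset_V: "e \<in> E \<Longrightarrow> e \<subseteq> V"
  using simple by (simp add: simple_graph_def)

lemma finite_E: "finite E"
  by (rule finite_subset[of _ "Pow V"]) (use finite_V edge_subset_V in auto)

lemma singleton_not_edge: "{a} \<notin> E"
  using simple by (auto simp: simple_graph_def)

lemma incompatibleD:
  assumes "incompatible F e e'"
  shows "e \<in> E" "e' \<in> E" "e \<noteq> e'" "\<exists>v. e \<inter> e' = {v} \<and> {e, e'} \<in> F v"
proof -
  obtain v where v: "{e, e'} \<in> F v"
    using assms by (auto simp: incompatible_def)
  moreover have "\<forall>p\<in>F v. \<exists>a b. p = {a, b} \<and> a \<noteq> b \<and> a \<in> E \<and> b \<in> E \<and> a \<inter> b = {v}"
    using system by (simp add: incompat_system_def)
  ultimately obtain a b where "{e, e'} = {a, b}" "a \<noteq> b" "a \<in> E" "b \<in> E" "a \<inter> b = {v}"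
    by meson
  then have "e \<in> E \<and> e' \<in> E \<and> e \<noteq> e' \<and> e \<inter> e' = {v}"
    by (auto simp: doubleton_eq_iff Int_commute)
  then show "e \<in> E" "e' \<in> E" "e \<noteq> e'" "\<exists>v. e \<inter> e' = {v} \<and> {e, e'} \<in> F v"
    using v by auto
qed

lemma not_incompatible_self: "\<not> incompatible F e e"
  using incompatibleD(3) by auto

lemma finite_incompatible_edges: "finite {e'. e' \<noteq> e \<and> v \<in> e' \<and> {e, e'} \<in> F v}"
proof (rule finite_subset[OF _ finite_E])
  show "{e'. e' \<noteq> e \<and> v \<in> e' \<and> {e, e'} \<in> F v} \<subseteq> E"
  proof
    fix e' assume "e' \<in> {e'. e' \<noteq> e \<and> v \<in> e' \<and> {e, e'} \<in> F v}"
    then have "incompatible F e e'" unfolding incompatible_def by blast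
    then show "e' \<in> E" by (rule incompatibleD(2))
  qed
qed

lemma card_incompatible_at_vertex_le:
  "real (card {u \<in> V. incompatible F {v, x} {v, u}}) \<le> m"
proof (cases "{u \<in> V. incompatible F {v, x} {v, u}} = {}")
  case True
  show ?thesis unfolding True using bound_nonneg by simp
next
  case False
  then obtain u where "incompatible F {v, x} {v, u}"
    by blast
  then have "{v, x} \<in> E"
    by (rule incompatibleD(1))
  then have bound: "real (card {e'. e' \<noteq> {v, x} \<and> v \<in> e' \<and> {{v, x}, e'} \<in> F v}) \<le> m"
    using bounded unfolding bounded_system_def by auto
  have "inj_on (\<lambda>u. {v, u}) {u \<in> V. incompatible F {v, x} {v, u}}"
    by (intro inj_onI) (metis doubleton_eq_iff)
  moreover have "(\<lambda>u. {v, u}) ` {u \<in> V. incompatible F {v, x} {v, u}}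
      \<subseteq> {e'. e' \<noteq> {v, x} \<and> v \<in> e' \<and> {{v, x}, e'} \<in> F v}"
  proof clarify
    fix u assume "incompatible F {v, x} {v, u}"
    then obtain z where "{v, x} \<noteq> {v, u}" "{v, x} \<inter> {v, u} = {z}" "{{v, x}, {v, u}} \<in> F z"
      using incompatibleD(3,4) by blast
    then show "{v, u} \<noteq> {v, x} \<and> v \<in> {v, u} \<and> {{v, x}, {v, u}} \<in> F v"
      by auto
  qed
  ultimately have "card {u \<in> V. incompatible F {v, x} {v, u}}
      \<le> card {e'. e' \<noteq> {v, x} \<and> v \<in> e' \<and> {{v, x}, e'} \<in> F v}"
    using finite_incompatible_edges by (rule card_inj_on_le)
  then show ?thesis using bound by linarith
qed

lemma no_incompatible_if_bound_lt_1:
  assumes "m < 1"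
  shows "\<not> incompatible F e e'"
proof
  assume "incompatible F e e'"
  then obtain v where "e \<in> E" "e \<noteq> e'" "e \<inter> e' = {v}" "{e, e'} \<in> F v"
    using incompatibleD(1,3,4) by metis
  moreover have "real (card {e''. e'' \<noteq> e \<and> v \<in> e'' \<and> {e, e''} \<in> F v}) \<le> m"
    if "e \<in> E" "v \<in> e"
    using bounded that unfolding bounded_system_def by auto
  ultimately have "card {e''. e'' \<noteq> e \<and> v \<in> e'' \<and> {e, e''} \<in> F v} = 0"
    using assms by fastforce
  then show False
    using finite_incompatible_edges \<open>e \<noteq> e'\<close> \<open>e \<inter> e' = {v}\<close> \<open>{e, e'} \<in> F v\<close> by auto
qed

lemma degree_eq_card_neighbors: "degree E v = card {u. {v, u} \<in> E}"
proof -
  have "{e \<in> E. v \<in> e} = (\<lambda>u. {v, u}) ` {u. {v, u} \<in> E}"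
  proof (intro set_eqI iffI)
    fix e assume e: "e \<in> {e \<in> E. v \<in> e}"
    then obtain a b where "e = {a, b}"
      using simple by (auto simp: simple_graph_def card_2_iff)
    then show "e \<in> (\<lambda>u. {v, u}) ` {u. {v, u} \<in> E}"
      using e by (auto simp: insert_commute)
  qed auto
  moreover have "inj_on (\<lambda>u. {v, u}) {u. {v, u} \<in> E}"
    by (intro inj_onI) (metis doubleton_eq_iff)
  ultimately show ?thesis
    unfolding degree_def by (simp add: card_image)
qed

lemma card_bad_at_index_le:
  "real (card {u \<in> V. bad_neighbor E F P u i}) \<le> 2 * m"
proof -
  let ?prev = "{u \<in> V. incompatible F {P ! i, P ! (i - 1)} {P ! i, u}}"
  let ?next = "{u \<in> V. incompatible F {P ! i, P ! Suc i} {P ! i, u}}"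
  have "{u, P ! i} = {P ! i, u}" for u
    by auto
  then have "{u \<in> V. bad_neighbor E F P u i} \<subseteq> ?prev \<union> ?next"
    unfolding bad_neighbor_def by (auto simp: incompatible_commute)
  then have "card {u \<in> V. bad_neighbor E F P u i} \<le> card (?prev \<union> ?next)"
    by (simp add: card_mono finite_V)
  then have "card {u \<in> V. bad_neighbor E F P u i} \<le> card ?prev + card ?next"
    using card_Un_le[of ?prev ?next] by linarith
  then show ?thesis
    using card_incompatible_at_vertex_le[of "P ! i" "P ! (i - 1)"]
      card_incompatible_at_vertex_le[of "P ! i" "P ! Suc i"] by linarith
qed

lemma sum_card_bad_neighbors_le:
  "(\<Sum>u \<in> V. real (card (bad_neighbors E F P u))) \<le> 2 * real (length P) * m"
proof -
  have "card (bad_neighbors E F P u) \<le> card {i \<in> {..<length P}. bad_neighbor E F P u i}" for u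
  proof -
    have "bad_neighbors E F P u = (!) P ` {i \<in> {..<length P}. bad_neighbor E F P u i}"
      by (auto simp: bad_neighbors_def bad_neighbor_def)
    then show ?thesis by (simp add: card_image_le)
  qed
  then have "(\<Sum>u \<in> V. real (card (bad_neighbors E F P u)))
      \<le> real (\<Sum>u \<in> V. card {i \<in> {..<length P}. bad_neighbor E F P u i})"
    by (simp add: sum_mono)
  also have "(\<Sum>u \<in> V. card {i \<in> {..<length P}. bad_neighbor E F P u i})
      = (\<Sum>i < length P. card {u \<in> V. bad_neighbor E F P u i})"
    by (rule sum_multicount_gen) (simp_all add: finite_V)
  also have "real \<dots> \<le> (\<Sum>i < length P. 2 * m)"
    unfolding of_nat_sum by (rule sum_mono) (rule card_bad_at_index_le)
  also have "\<dots> = 2 * real (length P) * m"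
    by simp
  finally show ?thesis .
qed

lemma card_many_bad_neighbors_le:
  assumes "0 < c"
  shows "real (card {u \<in> V. c \<le> real (card (bad_neighbors E F P u))}) * c \<le> 2 * real (length P) * m"
proof -
  let ?S = "{u \<in> V. c \<le> real (card (bad_neighbors E F P u))}"
  have "real (card ?S) * c = (\<Sum>u \<in> ?S. c)"
    by simp
  also have "\<dots> \<le> (\<Sum>u \<in> ?S. real (card (bad_neighbors E F P u)))"
    by (rule sum_mono) auto
  also have "\<dots> \<le> (\<Sum>u \<in> V. real (card (bad_neighbors E F P u)))"
    by (rule sum_mono2) (auto simp: finite_V)
  also have "\<dots> \<le> 2 * real (length P) * m"
    by (rule sum_card_bad_neighbors_le)
  finally show ?thesis .
qed

lemma card_correlated_le:
  assumes "0 < g"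
  shows "real (card {w \<in> V. correlated V E F g w x}) * (g * real (card V)) \<le> real (card V) * m"
proof -
  define C where "C w u \<longleftrightarrow> {w, u} \<in> E \<and> {x, u} \<in> E \<and> incompatible F {w, u} {x, u}" for w u
  let ?S = "{w \<in> V. correlated V E F g w x}"
  have C_le: "real (card {w \<in> V. C w u}) \<le> m" for u
  proof -
    have "incompatible F {u, x} {u, w}" if "C w u" for w
      using that incompatible_commute[of F "{w, u}" "{x, u}"] by (simp add: C_def insert_commute)
    then have "card {w \<in> V. C w u} \<le> card {w \<in> V. incompatible F {u, x} {u, w}}"
      by (intro card_mono) (auto simp: finite_V)
    then show ?thesis
      using card_incompatible_at_vertex_le[of u x] by linarith
  qed
  have "real (card ?S) * (g * real (card V)) = (\<Sum>w \<in> ?S. g * real (card V))"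
    by simp
  also have "\<dots> \<le> (\<Sum>w \<in> ?S. real (card {u \<in> V. C w u}))"
    by (rule sum_mono) (simp add: correlated_def C_def)
  also have "\<dots> \<le> (\<Sum>w \<in> V. real (card {u \<in> V. C w u}))"
    by (rule sum_mono2) (auto simp: finite_V)
  also have "\<dots> = real (\<Sum>u \<in> V. card {w \<in> V. C w u})"
    unfolding of_nat_sum[symmetric] by (subst sum_multicount_gen) (simp_all add: finite_V)
  also have "\<dots> \<le> (\<Sum>u \<in> V. m)"
    unfolding of_nat_sum by (rule sum_mono) (rule C_le)
  also have "\<dots> = real (card V) * m"
    by simp
  finally show ?thesis .
qed

lemma compatible_path_if_path_edges_subset:
  assumes "compatible_path F P" "path_edges Q \<subseteq> path_edges P \<union> {f}"
    and "\<forall>e \<in> path_edges P. \<not> incompatible F f e"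
  shows "compatible_path F Q"
  unfolding compatible_path_def
proof (intro ballI)
  fix e e' assume "e \<in> path_edges Q" "e' \<in> path_edges Q"
  then have "e \<in> path_edges P \<or> e = f" "e' \<in> path_edges P \<or> e' = f"
    using assms(2) by auto
  then show "\<not> incompatible F e e'"
    using assms(1,3) not_incompatible_self incompatible_commute[of F f]
    unfolding compatible_path_def by metis
qed

lemma path_edge_incompatible_with_edge_at_hd:
  assumes "distinct P" "e \<in> path_edges P" "incompatible F {hd P, y} e"
  shows "e = {P ! 0, P ! 1} \<or> y \<in> e"
proof -
  obtain z where "{hd P, y} \<inter> e = {z}"
    using incompatibleD(4)[OF assms(3)] by blast
  then have "z \<in> {hd P, y} \<inter> e"
    by simp
  then have "hd P \<in> e \<or> y \<in> e"
    by blast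
  then show ?thesis
    using path_edge_at_hd[OF assms(1,2)] by (elim disjE) simp_all
qed

lemma smooth_path_Cons:
  assumes smooth: "smooth_path V E F \<mu> P"
    and w: "w \<in> V" "w \<notin> set P" "{hd P, w} \<in> E"
    and compat: "\<forall>e \<in> path_edges P. \<not> incompatible F {hd P, w} e"
    and good_w: "real (card (bad_neighbors E F P w)) < 8 * sqrt \<mu> * real (length P)"
    and good_last: "\<forall>y \<in> {hd P, w}. \<not> incompatible F {last P, y} {hd P, w}"
    and uncorrelated: "\<not> correlated V E F (sqrt \<mu>) w (last P)"
  shows "smooth_path V E F \<mu> (w # P)"
proof -
  have P: "P \<noteq> []" "distinct P" "set P \<subseteq> V" "path_edges P \<subseteq> E" "compatible_path F P"
    and good_last_P: "gamma_good E F (8 * sqrt \<mu>) P (last P)"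
    using smooth by (auto simp: smooth_path_def is_path_iff_path_edges)
  have edges: "path_edges (w # P) \<subseteq> path_edges P \<union> {{hd P, w}}"
    using P(1) by (simp add: path_edges_Cons insert_commute)
  have distinct: "distinct (w # P)"
    using P(2) w(2) by simp
  have path: "is_path V E (w # P)"
    using P w(1,3) distinct edges by (auto simp: is_path_iff_path_edges)
  have compatible: "compatible_path F (w # P)"
    using compatible_path_if_path_edges_subset[OF P(5) edges compat] .
  have "0 < sqrt \<mu> * real (length P)"
    using good_w of_nat_0_le_iff[of "card (bad_neighbors E F P w)"] by linarith
  then have longer: "8 * sqrt \<mu> * real (length P) \<le> 8 * sqrt \<mu> * real (length (w # P))"
    by (simp add: zero_less_mult_iff)
  have "{w, hd P} = {hd P, w}"
    by auto
  then have "\<forall>y \<in> {hd P, w}. \<not> incompatible F {w, y} {hd P, w}"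
    using not_incompatible_self singleton_not_edge incompatibleD(1) by fastforce
  then have "card (bad_neighbors E F (w # P) w) \<le> card (bad_neighbors E F P w)"
    by (rule card_bad_neighbors_le_if_new_edge_harmless[OF P(2) distinct edges])
  then have good_hd: "gamma_good E F (8 * sqrt \<mu>) (w # P) (hd (w # P))"
    using good_w longer by (simp add: gamma_good_def gamma_bad_def)
  have "card (bad_neighbors E F (w # P) (last P)) \<le> card (bad_neighbors E F P (last P))"
    by (rule card_bad_neighbors_le_if_new_edge_harmless[OF P(2) distinct edges good_last])
  then have "gamma_good E F (8 * sqrt \<mu>) (w # P) (last (w # P))"
    using good_last_P longer P(1) by (simp add: gamma_good_def gamma_bad_def)
  then show ?thesis
    using path compatible good_hd uncorrelated P(1) by (simp add: smooth_path_def)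
qed

lemma smooth_path_rotate:
  assumes smooth: "smooth_path V E F \<mu> P"
    and i: "0 < i" "i < length P" "{P ! 0, P ! i} \<in> E"
    and compat: "\<forall>e \<in> path_edges P. \<not> incompatible F {P ! 0, P ! i} e"
    and good_hd: "m < 1 \<or>
      real (card (bad_neighbors E F P (P ! (i - 1)))) + 2 < 8 * sqrt \<mu> * real (length P)"
    and good_last: "\<forall>y \<in> {P ! 0, P ! i}. \<not> incompatible F {last P, y} {P ! 0, P ! i}"
    and uncorrelated: "\<not> correlated V E F (sqrt \<mu>) (P ! (i - 1)) (last P)"
  shows "smooth_path V E F \<mu> (rev (take i P) @ drop i P)"
proof -
  let ?Q = "rev (take i P) @ drop i P"
  have P: "P \<noteq> []" "distinct P" "set P \<subseteq> V" "path_edges P \<subseteq> E" "compatible_path F P"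
    and good_hd_P: "gamma_good E F (8 * sqrt \<mu>) P (hd P)"
    and good_last_P: "gamma_good E F (8 * sqrt \<mu>) P (last P)"
    using smooth by (auto simp: smooth_path_def is_path_iff_path_edges)
  note Q = rotated_path_simps[OF i(1,2)]
  have edges: "path_edges ?Q \<subseteq> path_edges P \<union> {{P ! 0, P ! i}}"
    using path_edges_rotate[OF i(1,2)] .
  have path: "is_path V E ?Q"
    using P Q edges i(3) by (auto simp: is_path_iff_path_edges)
  have compatible: "compatible_path F ?Q"
    using compatible_path_if_path_edges_subset[OF P(5) edges compat] .
  have "card (bad_neighbors E F ?Q (P ! (i - 1))) \<le> card (bad_neighbors E F P (P ! (i - 1))) + 2"
    by (rule card_bad_neighbors_le_add_2[OF P(2) Q(3)[OF P(2)] edges])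
  moreover have "0 < 8 * sqrt \<mu> * real (length P)"
    using good_hd_P by (simp add: gamma_good_def gamma_bad_def)
  moreover have "bad_neighbors E F ?Q (P ! (i - 1)) = {}" if "m < 1"
    using no_incompatible_if_bound_lt_1[OF that] by (auto simp: bad_neighbors_def bad_neighbor_def)
  ultimately have good_hd_Q: "gamma_good E F (8 * sqrt \<mu>) ?Q (hd ?Q)"
    using good_hd Q(1,4) by (auto simp: gamma_good_def gamma_bad_def)
  have "card (bad_neighbors E F ?Q (last P)) \<le> card (bad_neighbors E F P (last P))"
    by (rule card_bad_neighbors_le_if_new_edge_harmless[OF P(2) Q(3)[OF P(2)] edges good_last])
  then have "gamma_good E F (8 * sqrt \<mu>) ?Q (last ?Q)"
    using good_last_P Q(1,5) by (simp add: gamma_good_def gamma_bad_def)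
  then show ?thesis
    using path compatible good_hd_Q uncorrelated Q(4,5) by (simp add: smooth_path_def)
qed

end

section \<open>Maximal smooth paths\<close>

locale maximal_smooth_path = bounded_incompat_system V E F "\<mu> * real (card V)"
  for V :: "'a set" and E :: "'a set set" and F :: "'a \<Rightarrow> 'a set set set" and \<mu> :: real +
  fixes P :: "'a list"
  assumes mu_pos: "0 < \<mu>" and mu_le: "\<mu> \<le> 1 / 225"
    and min_degree: "\<forall>v \<in> V. real (degree E v) \<ge> 15 * sqrt \<mu> * real (card V)"
    and smooth: "smooth_path V E F \<mu> P"
    and maximal: "\<not> (\<exists>w. w \<notin> set P \<and> smooth_path V E F \<mu> (w # P))"
begin

abbreviation n :: real where "n \<equiv> real (card V)"
abbreviation s :: real where "s \<equiv> sqrt \<mu>"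

lemma s_pos: "0 < s"
  using mu_pos by simp

lemma s_le: "s \<le> 1 / 15"
proof -
  have "sqrt \<mu> \<le> sqrt (1 / 225)"
    using mu_le by (rule real_sqrt_le_mono)
  also have "sqrt (1 / 225) = (1 / 15 :: real)"
    by (rule real_sqrt_unique) (simp_all add: power2_eq_square)
  finally show ?thesis .
qed

lemma mu_n_eq: "\<mu> * n = s * (s * n)"
  using mu_pos by (simp add: mult.assoc[symmetric])

lemma mu_n_le: "\<mu> * n \<le> s * n / 15"
proof -
  have "s * (s * n) \<le> (1 / 15) * (s * n)"
    using s_le s_pos by (intro mult_right_mono) simp_all
  then show ?thesis
    by (simp add: mu_n_eq)
qed

lemma path_P: "P \<noteq> []" "distinct P" "set P \<subseteq> V" "path_edges P \<subseteq> E"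
  using smooth by (auto simp: smooth_path_def is_path_iff_path_edges)

lemma hd_P_eq: "hd P = P ! 0"
  using path_P(1) by (simp add: hd_conv_nth)

lemma hd_P_in_V: "hd P \<in> V"
  using path_P(1,3) by auto

lemma n_pos: "0 < n"
  using hd_P_in_V finite_V card_gt_0_iff by fastforce

lemma length_P_le: "real (length P) \<le> n"
  using card_mono[OF finite_V path_P(3)] distinct_card[OF path_P(2)] by simp

lemma card_bad_neighbors_hd_lt: "real (card (bad_neighbors E F P (hd P))) < 8 * s * real (length P)"
  using smooth by (simp add: smooth_path_def gamma_good_def gamma_bad_def)

text \<open>For P = [v0] the vertex P ! 1 is a junk value; harmless, as P then has no edges.\<close>

definition first_edge_conflicts :: "'a set" where
  "first_edge_conflicts = {w \<in> V. incompatible F {hd P, P ! 1} {hd P, w}}"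

definition chord_conflicts :: "'a set" where
  "chord_conflicts = {w \<in> V. incompatible F {hd P, last P} {hd P, w}}"

definition end_conflicts :: "'a set" where
  "end_conflicts = {w \<in> V. {hd P, w} \<in> E \<and> {last P, w} \<in> E \<and> incompatible F {hd P, w} {last P, w}}"

definition correlated_with_last :: "'a set" where
  "correlated_with_last = {w \<in> V. correlated V E F s w (last P)}"

definition bad_vertices :: "'a set" where
  "bad_vertices = {w \<in> V. 8 * s * real (length P) \<le> real (card (bad_neighbors E F P w))}"

lemma card_first_edge_conflicts_le: "real (card first_edge_conflicts) \<le> \<mu> * n"
  unfolding first_edge_conflicts_def by (rule card_incompatible_at_vertex_le)

lemma card_chord_conflicts_le: "real (card chord_conflicts) \<le> \<mu> * n"
  unfolding chord_conflicts_def by (rule card_incompatible_at_vertex_le)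

lemma card_end_conflicts_lt: "real (card end_conflicts) < s * n"
  using smooth by (simp add: smooth_path_def correlated_def end_conflicts_def)

lemma card_correlated_with_last_le: "real (card correlated_with_last) \<le> s * n"
proof -
  have "real (card correlated_with_last) * (s * n) \<le> n * (\<mu> * n)"
    unfolding correlated_with_last_def using card_correlated_le[OF s_pos] .
  also have "\<dots> = (s * n) * (s * n)"
    by (simp add: mu_n_eq algebra_simps)
  finally show ?thesis
    using s_pos n_pos by (simp add: mult_le_cancel_right_pos)
qed

lemma card_bad_vertices_le: "real (card bad_vertices) \<le> s * n / 4"
proof -
  have pos: "0 < 8 * s * real (length P)"
    using s_pos path_P(1) by simp
  have "real (card bad_vertices) * (8 * s * real (length P)) \<le> 2 * real (length P) * (\<mu> * n)"
    unfolding bad_vertices_def by (rule card_many_bad_neighbors_le[OF pos])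
  also have "\<dots> = (s * n / 4) * (8 * s * real (length P))"
    by (simp add: mu_n_eq algebra_simps)
  finally show ?thesis
    using pos by (simp only: mult_le_cancel_right_pos)
qed

lemma new_edge_at_hd_compatible:
  assumes w: "w \<in> V" "{hd P, w} \<in> E"
    and "w \<notin> first_edge_conflicts" "w \<notin> bad_neighbors E F P (hd P)"
  shows "\<forall>e \<in> path_edges P. \<not> incompatible F {hd P, w} e"
proof (intro ballI notI)
  fix e assume e: "e \<in> path_edges P" and inc: "incompatible F {hd P, w} e"
  then consider "e = {P ! 0, P ! 1}" | "w \<in> e"
    using path_edge_incompatible_with_edge_at_hd[OF path_P(2)] by blast
  then show False
  proof cases
    case 1
    then have "w \<in> first_edge_conflicts"
      using inc w(1) incompatible_commute[of F "{hd P, w}" e] hd_P_eq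
      unfolding first_edge_conflicts_def by simp
    then show False
      using assms(3) by simp
  next
    case 2
    then have "w \<in> bad_neighbors E F P (hd P)"
      using e inc w(2) path_edges_subset_set[OF e] unfolding bad_neighbors_eq[OF path_P(2)] by blast
    then show False
      using assms(4) by simp
  qed
qed

lemma new_edge_at_hd_harmless_for_last:
  assumes w: "w \<in> V" "{hd P, w} \<in> E" and "w \<notin> chord_conflicts" "w \<notin> end_conflicts"
  shows "\<forall>y \<in> {hd P, w}. \<not> incompatible F {last P, y} {hd P, w}"
proof (intro ballI notI)
  fix y assume "y \<in> {hd P, w}" and inc: "incompatible F {last P, y} {hd P, w}"
  then consider "y = hd P" | "y = w"
    by blast
  then show False
  proof cases
    case 1
    moreover have "{last P, hd P} = {hd P, last P}"
      by auto
    ultimately have "w \<in> chord_conflicts"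
      using inc w(1) by (simp add: chord_conflicts_def)
    then show False
      using assms(3) by simp
  next
    case 2
    moreover have "{hd P, w} = {w, hd P}" "{last P, w} = {w, last P}"
      by auto
    ultimately have "w \<in> end_conflicts"
      using inc w incompatibleD(1)[OF inc] incompatible_commute[of F "{last P, y}" "{hd P, w}"]
      by (simp add: end_conflicts_def)
    then show False
      using assms(4) by simp
  qed
qed

lemma neighbor_off_path_exceptional:
  assumes edge: "{hd P, w} \<in> E" and off: "w \<notin> set P"
  shows "w \<in> first_edge_conflicts \<union> chord_conflicts \<union> end_conflicts \<union> correlated_with_last
    \<union> bad_vertices"
proof (rule ccontr)
  assume not: "w \<notin> first_edge_conflicts \<union> chord_conflicts \<union> end_conflicts \<union> correlated_with_last
    \<union> bad_vertices"
  have w: "w \<in> V"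
    using edge edge_subset_V by auto
  moreover have "w \<notin> bad_neighbors E F P (hd P)"
    using off bad_neighbors_subset_set[of E F P "hd P"] by blast
  ultimately have "smooth_path V E F \<mu> (w # P)"
    using not edge by (intro smooth_path_Cons[OF smooth w off edge new_edge_at_hd_compatible
        _ new_edge_at_hd_harmless_for_last]) (auto simp: bad_vertices_def correlated_with_last_def)
  then show False
    using maximal off by blast
qed

lemma card_neighbors_off_path_le:
  "real (card ({u. {hd P, u} \<in> E} - set P)) \<le> 2 * (\<mu> * n) + 9 / 4 * (s * n)"
proof -
  let ?A = "first_edge_conflicts \<union> chord_conflicts \<union> end_conflicts \<union> correlated_with_last"
  have "card ({u. {hd P, u} \<in> E} - set P) \<le> card (?A \<union> bad_vertices)"
    using neighbor_off_path_exceptional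
    by (intro card_mono) (auto simp: finite_subset[OF _ finite_V] first_edge_conflicts_def
        chord_conflicts_def end_conflicts_def correlated_with_last_def bad_vertices_def)
  also have "\<dots> \<le> card first_edge_conflicts + card chord_conflicts + card end_conflicts
      + card correlated_with_last + card bad_vertices"
    using card_Un_le[of ?A bad_vertices] card_Un_le[of first_edge_conflicts chord_conflicts]
      card_Un_le[of "first_edge_conflicts \<union> chord_conflicts" end_conflicts]
      card_Un_le[of "first_edge_conflicts \<union> chord_conflicts \<union> end_conflicts" correlated_with_last]
    by linarith
  finally show ?thesis
    using card_first_edge_conflicts_le card_chord_conflicts_le card_end_conflicts_lt
      card_correlated_with_last_le card_bad_vertices_le by linarith
qed

lemma degree_hd_ge: "15 * (s * n) \<le> real (degree E (hd P))"
  using min_degree hd_P_in_V by (simp add: mult.assoc)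

lemma length_P_ge: "12 * (s * n) \<le> real (length P)"
proof -
  let ?N = "{u. {hd P, u} \<in> E}"
  have fin: "finite ?N"
    using finite_V edge_subset_V by (auto intro: finite_subset[of _ V])
  have "card ?N \<le> card (?N - set P) + card (?N \<inter> set P)"
    using card_Un_le[of "?N - set P" "?N \<inter> set P"] by (simp add: Un_Diff_Int)
  moreover have "card (?N \<inter> set P) \<le> length P"
    using card_mono[of "set P" "?N \<inter> set P"] card_length[of P] by auto
  ultimately show ?thesis
    using degree_hd_ge card_neighbors_off_path_le mu_n_le degree_eq_card_neighbors[of "hd P"] by linarith
qed

text \<open>The guard 1 \<le> \<mu> n is what makes these vertices rare: it forces s |P| \<ge> 12, so the
  slack of 2 is negligible. For \<mu> n < 1 the system has no incompatible pairs at all.\<close>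

definition nearly_bad_vertices :: "'a set" where
  "nearly_bad_vertices = {w \<in> V. 1 \<le> \<mu> * n \<and>
     8 * s * real (length P) \<le> real (card (bad_neighbors E F P w)) + 2}"

lemma card_nearly_bad_vertices_le: "real (card nearly_bad_vertices) \<le> s * n"
proof (cases "1 \<le> \<mu> * n")
  case True
  have "12 * (\<mu> * n) \<le> s * real (length P)"
    using mult_left_mono[OF length_P_ge, of s] s_pos by (simp add: mu_n_eq)
  then have long: "12 \<le> s * real (length P)"
    using True by linarith
  define c where "c = 8 * s * real (length P) - 2"
  have c: "7 * (s * real (length P)) \<le> c" "0 < c"
    using long by (simp_all add: c_def)
  have "real (card nearly_bad_vertices) * (7 * (s * real (length P)))
      \<le> real (card nearly_bad_vertices) * c"
    using c(1) by (simp add: mult_left_mono)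
  also have "\<dots> \<le> 2 * real (length P) * (\<mu> * n)"
    using card_many_bad_neighbors_le[OF c(2), of P] True
    unfolding nearly_bad_vertices_def c_def by (simp add: algebra_simps)
  also have "\<dots> = (2 / 7 * (s * n)) * (7 * (s * real (length P)))"
    by (simp add: mu_n_eq algebra_simps)
  finally have "real (card nearly_bad_vertices) \<le> 2 / 7 * (s * n)"
    using long by (simp only: mult_le_cancel_right_pos)
  then show ?thesis
    using s_pos n_pos by simp
next
  case False
  then show ?thesis
    using s_pos n_pos by (simp add: nearly_bad_vertices_def)
qed

definition exceptional_neighbors :: "'a set" where
  "exceptional_neighbors = first_edge_conflicts \<union> chord_conflicts \<union> end_conflicts
     \<union> successors_on_path P nearly_bad_vertices \<union> successors_on_path P correlated_with_last"

lemma finite_exceptional_neighbors: "finite exceptional_neighbors"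
proof (rule finite_subset[OF _ finite_V])
  have "successors_on_path P S \<subseteq> set P" for S
    by (auto simp: successors_on_path_def)
  then show "exceptional_neighbors \<subseteq> V"
    using path_P(3) by (auto simp: exceptional_neighbors_def first_edge_conflicts_def
        chord_conflicts_def end_conflicts_def)
qed

lemma card_exceptional_neighbors_le: "real (card exceptional_neighbors) \<le> 2 * (\<mu> * n) + 3 * (s * n)"
proof -
  have fin: "finite nearly_bad_vertices" "finite correlated_with_last"
    using finite_V by (simp_all add: nearly_bad_vertices_def correlated_with_last_def)
  let ?A = "first_edge_conflicts \<union> chord_conflicts \<union> end_conflicts"
  let ?B = "successors_on_path P nearly_bad_vertices"
  let ?C = "successors_on_path P correlated_with_last"
  have "card exceptional_neighbors \<le> card first_edge_conflicts + card chord_conflicts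
      + card end_conflicts + card ?B + card ?C"
    unfolding exceptional_neighbors_def
    using card_Un_le[of "?A \<union> ?B" ?C] card_Un_le[of ?A ?B] card_Un_le[of first_edge_conflicts chord_conflicts]
      card_Un_le[of "first_edge_conflicts \<union> chord_conflicts" end_conflicts]
    by linarith
  moreover have "card ?B \<le> card nearly_bad_vertices" "card ?C \<le> card correlated_with_last"
    using card_successors_on_path_le[OF path_P(2)] fin by auto
  ultimately show ?thesis
    using card_first_edge_conflicts_le card_chord_conflicts_le card_end_conflicts_lt
      card_nearly_bad_vertices_le card_correlated_with_last_le by linarith
qed

lemma smooth_path_rotate_at_good_neighbor:
  assumes i: "i < length P" and good: "P ! i \<in> good_neighbors E F P (hd P)"
    and unexceptional: "P ! i \<notin> exceptional_neighbors"
  shows "smooth_path V E F \<mu> (rev (take i P) @ drop i P)"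
proof -
  have "good_neighbor E F P (hd P) i"
    using good good_neighbors_nth_iff[OF path_P(2) i] by blast
  then have edge: "{hd P, P ! i} \<in> E" and not_bad: "P ! i \<notin> bad_neighbors E F P (hd P)"
    using bad_neighbors_nth_iff[OF path_P(2) i] by (simp_all add: good_neighbor_def)
  have i_V: "P ! i \<in> V"
    using i path_P(3) by auto
  have i_pos: "0 < i"
    using edge singleton_not_edge hd_P_eq by (cases i) auto
  have "P ! (i - 1) \<notin> nearly_bad_vertices" "P ! (i - 1) \<notin> correlated_with_last"
    using unexceptional successor_on_path[OF i_pos i] by (auto simp: exceptional_neighbors_def)
  moreover have "P ! (i - 1) \<in> V"
    using i path_P(3) by auto
  ultimately have good_hd: "\<mu> * n < 1 \<or>
      real (card (bad_neighbors E F P (P ! (i - 1)))) + 2 < 8 * s * real (length P)"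
    and uncorrelated: "\<not> correlated V E F s (P ! (i - 1)) (last P)"
    by (auto simp: nearly_bad_vertices_def correlated_with_last_def)
  have compat: "\<forall>e \<in> path_edges P. \<not> incompatible F {hd P, P ! i} e"
    using new_edge_at_hd_compatible[OF i_V edge _ not_bad] unexceptional
    by (simp add: exceptional_neighbors_def)
  have good_last: "\<forall>y \<in> {hd P, P ! i}. \<not> incompatible F {last P, y} {hd P, P ! i}"
    using new_edge_at_hd_harmless_for_last[OF i_V edge] unexceptional
    by (simp add: exceptional_neighbors_def)
  show ?thesis
    using smooth_path_rotate[OF smooth i_pos i _ _ good_hd _ uncorrelated] edge compat good_last
    by (simp add: hd_P_eq)
qed

lemma card_good_neighbors_hd_ge:
  "real (degree E (hd P)) - 2 * (\<mu> * n) - 41 / 4 * (s * n) \<le> real (card (good_neighbors E F P (hd P)))"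
proof -
  let ?N = "{u. {hd P, u} \<in> E}"
  have "?N \<inter> set P \<subseteq> good_neighbors E F P (hd P) \<union> bad_neighbors E F P (hd P)"
  proof
    fix u assume "u \<in> ?N \<inter> set P"
    then obtain k where "k < length P" "u = P ! k" "{hd P, P ! k} \<in> E"
      by (auto simp: in_set_conv_nth)
    then show "u \<in> good_neighbors E F P (hd P) \<union> bad_neighbors E F P (hd P)"
      by (cases "bad_neighbor E F P (hd P) k")
        (auto simp: good_neighbors_def bad_neighbors_def good_neighbor_def)
  qed
  then have "card (?N \<inter> set P) \<le> card (good_neighbors E F P (hd P)) + card (bad_neighbors E F P (hd P))"
    using card_Un_le[of "good_neighbors E F P (hd P)" "bad_neighbors E F P (hd P)"]
      card_mono[of "good_neighbors E F P (hd P) \<union> bad_neighbors E F P (hd P)" "?N \<inter> set P"]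
      finite_bad_neighbors finite_subset[of "good_neighbors E F P (hd P)" "set P"]
    by (force simp: good_neighbors_def good_neighbor_def)
  moreover have "card ?N \<le> card (?N - set P) + card (?N \<inter> set P)"
    using card_Un_le[of "?N - set P" "?N \<inter> set P"] by (simp add: Un_Diff_Int)
  moreover have "8 * s * real (length P) \<le> 8 * (s * n)"
    using length_P_le s_pos by simp
  ultimately show ?thesis
    using card_neighbors_off_path_le card_bad_neighbors_hd_lt degree_eq_card_neighbors[of "hd P"] by linarith
qed

end

theorem lemma2p5:
  fixes V :: "'a set" and E :: "'a set set" and F :: "'a \<Rightarrow> 'a set set set"
    and \<mu> :: real and P :: "'a list"
  assumes "simple_graph V E"
    and "0 < \<mu>" and "\<mu> \<le> 1 / 225"
    and "\<forall>v\<in>V. real (degree E v) \<ge> 15 * sqrt \<mu> * real (card V)"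
    and "incompat_system V E F"
    and "bounded_system E F (\<mu> * real (card V))"
    and "smooth_path V E F \<mu> P"
    and "\<not> (\<exists>w. w \<notin> set P \<and> smooth_path V E F \<mu> (w # P))"
  shows "\<exists>X. X \<subseteq> good_neighbors E F P (P ! 0) \<and>
           real (card X) \<ge> real (degree E (P ! 0)) - 14 * sqrt \<mu> * real (card V) \<and>
           (\<forall>i < length P. P ! i \<in> X \<longrightarrow> smooth_path V E F \<mu> (rev (take i P) @ drop i P))"
proof -
  interpret maximal_smooth_path V E F \<mu> P
    using assms by unfold_locales simp_all
  define X where "X = good_neighbors E F P (hd P) - exceptional_neighbors"
  have "card (good_neighbors E F P (hd P)) \<le> card X + card exceptional_neighbors"
    using diff_card_le_card_Diff[OF finite_exceptional_neighbors, of "good_neighbors E F P (hd P)"]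
    unfolding X_def by arith
  then have "real (card (good_neighbors E F P (hd P))) \<le> real (card X) + real (card exceptional_neighbors)"
    by (simp only: of_nat_add[symmetric] of_nat_le_iff)
  moreover have "0 < s * n"
    using s_pos n_pos by simp
  ultimately have "real (degree E (hd P)) - 14 * (s * n) \<le> real (card X)"
    using card_good_neighbors_hd_ge card_exceptional_neighbors_le mu_n_le by linarith
  moreover have "smooth_path V E F \<mu> (rev (take i P) @ drop i P)" if "i < length P" "P ! i \<in> X" for i
    using smooth_path_rotate_at_good_neighbor that unfolding X_def by blast
  moreover have "X \<subseteq> good_neighbors E F P (hd P)"
    unfolding X_def by blast
  ultimately show ?thesis
    unfolding hd_P_eq[symmetric] mult.assoc by blast
qed

end
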